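(* Let $G$ be a connected bipartite graph on $n$ vertices and $m$ edges with incidence matrix $M$, and let $J=[(-1)^{d(i,j)}]$ be the $n\times n$ matrix whose $(i,j)$-entry is $(-1)^{d(i,j)}$. Then $M^+J=O_{m,n}$ and $J^2=nJ$.
   Context: The incidence matrix $M$ is the $n\times m$ matrix with $(i,j)$-entry $1$ if vertex $i$ is incident with edge $e_j$ and $0$ otherwise; $M^+$ is its Moore-Penrose inverse (the unique matrix with $MM^+M=M$, $M^+MM^+=M^+$, $(MM^+)^T=MM^+$, $(M^+M)^T=M^+M$). $d(i,j)$ is the graph distance; $O_{m,n}$ is the $m\times n$ zero matrix. *)

theory Defs
  imports "Jordan_Normal_Form.Matrix"
begin

definition simple_graph :: "nat \<Rightarrow> nat set list \<Rightarrow> bool" where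
  "simple_graph n es \<longleftrightarrow> distinct es \<and>
     (\<forall>e\<in>set es. \<exists>u v. u < n \<and> v < n \<and> u \<noteq> v \<and> e = {u, v})"

definition adj :: "nat set list \<Rightarrow> nat \<Rightarrow> nat \<Rightarrow> bool" where
  "adj es u v \<longleftrightarrow> {u, v} \<in> set es"

definition walk_len :: "nat set list \<Rightarrow> nat \<Rightarrow> nat \<Rightarrow> nat \<Rightarrow> bool" where
  "walk_len es u v k \<longleftrightarrow> (\<exists>xs. length xs = Suc k \<and> hd xs = u \<and> last xs = v \<and>
     (\<forall>i<k. adj es (xs ! i) (xs ! Suc i)))"

definition connected_graph :: "nat \<Rightarrow> nat set list \<Rightarrow> bool" where
  "connected_graph n es \<longleftrightarrow> (\<forall>u<n. \<forall>v<n. \<exists>k. walk_len es u v k)"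

definition bipartite_graph :: "nat set list \<Rightarrow> bool" where
  "bipartite_graph es \<longleftrightarrow> (\<exists>c :: nat \<Rightarrow> bool. \<forall>u v. adj es u v \<longrightarrow> c u \<noteq> c v)"

definition gdist :: "nat set list \<Rightarrow> nat \<Rightarrow> nat \<Rightarrow> nat" where
  "gdist es u v = (LEAST k. walk_len es u v k)"

definition incidence_mat :: "nat \<Rightarrow> nat set list \<Rightarrow> real mat" where
  "incidence_mat n es = mat n (length es) (\<lambda>(i, j). if i \<in> es ! j then 1 else 0)"

definition sign_dist_mat :: "nat \<Rightarrow> nat set list \<Rightarrow> real mat" where
  "sign_dist_mat n es = mat n n (\<lambda>(i, j). (-1) ^ gdist es i j)"

definition is_MP_inverse :: "real mat \<Rightarrow> real mat \<Rightarrow> bool" where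
  "is_MP_inverse A X \<longleftrightarrow> X \<in> carrier_mat (dim_col A) (dim_row A) \<and>
     A * X * A = A \<and> X * A * X = X \<and>
     transpose_mat (A * X) = A * X \<and> transpose_mat (X * A) = X * A"

definition MP_inverse :: "real mat \<Rightarrow> real mat" where
  "MP_inverse A = (THE X. is_MP_inverse A X)"

end

theory Submission
  imports Defs "Jordan_Normal_Form.Matrix_Kernel"
begin

text \<open>Fix a proper 2-colouring of the bipartite graph and let s be the vector with
  s_i = 1 or -1 according to the colour of vertex i. The colour alternates along every walk,
  so (-1)^d(i,j) = s_i s_j, i.e. J = s s^T, and therefore J^2 = (s^T s) J = n J.
  Every edge joins two vertices of different colours, so M^T s = 0; since every
  Moore-Penrose inverse satisfies M^+ = M^+ (M^+)^T M^T, also M^+ s = 0 and hence M^+ J = 0.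
  That the definite description M^+ denotes a Moore-Penrose inverse at all follows from a
  full-rank factorisation A = B C (B with trivial kernel, C with a right inverse), for which
  C^T (C C^T)^-1 (B^T B)^-1 B^T is a Moore-Penrose inverse.\<close>

lemma assoc_mult_mat_dim:
  "dim_col A = dim_row B \<Longrightarrow> dim_col B = dim_row C \<Longrightarrow>
    (A :: 'a :: semiring_0 mat) * B * C = A * (B * C)"
  by (rule assoc_mult_mat[of A "dim_row A" "dim_col A" B "dim_col B" C "dim_col C"]) auto

lemma transpose_mult_dim:
  "dim_col A = dim_row B \<Longrightarrow>
    transpose_mat ((A :: 'a :: comm_semiring_0 mat) * B) = transpose_mat B * transpose_mat A"
  by (rule transpose_mult[of A "dim_row A" "dim_col A" B "dim_col B"]) auto

lemma assoc_mult_mat_vec_dim: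
  "dim_col A = dim_row B \<Longrightarrow> dim_col B = dim_vec v \<Longrightarrow>
    ((A :: 'a :: semiring_0 mat) * B) *\<^sub>v v = A *\<^sub>v (B *\<^sub>v v)"
  by (rule assoc_mult_mat_vec[of A "dim_row A" "dim_col A" B "dim_col B" v]) auto

lemma mult_mat_vec_zero_vec [simp]:
  "dim_col A = n \<Longrightarrow> (A :: 'a :: semiring_0 mat) *\<^sub>v 0\<^sub>v n = 0\<^sub>v (dim_row A)"
  by (intro eq_vecI) (auto simp: scalar_prod_def)

lemma real_scalar_prod_self_eq_0_iff:
  fixes v :: "real vec"
  assumes "v \<in> carrier_vec n"
  shows "v \<bullet> v = 0 \<longleftrightarrow> v = 0\<^sub>v n"
proof -
  have "conjugate v = v" by (intro eq_vecI) (auto simp: conjugate_vec_def)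
  then show ?thesis using conjugate_square_eq_0_vec[OF assms] by simp
qed

lemma gram_mult_vec_eq_0D:
  fixes B :: "real mat"
  assumes B: "B \<in> carrier_mat n l" and x: "x \<in> carrier_vec l"
    and Gx: "(transpose_mat B * B) *\<^sub>v x = 0\<^sub>v l"
  shows "B *\<^sub>v x = 0\<^sub>v n"
proof -
  have "(B *\<^sub>v x) \<bullet> (B *\<^sub>v x) = (transpose_mat B *\<^sub>v (B *\<^sub>v x)) \<bullet> x"
    using transpose_vec_mult_scalar[OF B x, of "B *\<^sub>v x"] B x by simp
  also have "\<dots> = 0" using Gx B x by (simp add: assoc_mult_mat_vec_dim)
  finally have "(B *\<^sub>v x) \<bullet> (B *\<^sub>v x) = 0" .
  then show ?thesis using real_scalar_prod_self_eq_0_iff[OF mult_mat_vec_carrier[OF B x]] by simp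
qed

lemma gram_mat_symmetric_inverse:
  fixes B :: "real mat"
  assumes B: "B \<in> carrier_mat n l" and ker: "mat_kernel B = {0\<^sub>v l}"
  obtains H where "H \<in> carrier_mat l l" "H * (transpose_mat B * B) = 1\<^sub>m l"
    "(transpose_mat B * B) * H = 1\<^sub>m l" "transpose_mat H = H"
proof -
  let ?G = "transpose_mat B * B"
  have G: "?G \<in> carrier_mat l l" using B by auto
  have "det ?G \<noteq> 0"
  proof
    assume "det ?G = 0"
    then obtain v where v: "v \<in> carrier_vec l" "v \<noteq> 0\<^sub>v l" "?G *\<^sub>v v = 0\<^sub>v l"
      using det_0_iff_vec_prod_zero[OF G] by blast
    have "B *\<^sub>v v = 0\<^sub>v n" using gram_mult_vec_eq_0D[OF B v(1) v(3)] .
    then have "v \<in> mat_kernel B" by (rule mat_kernelI[OF B v(1)])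
    with ker v(2) show False by simp
  qed
  from det_non_zero_imp_unit[OF G this, of "()"] obtain H
    where H: "H \<in> carrier_mat l l" "H * ?G = 1\<^sub>m l" "?G * H = 1\<^sub>m l"
    by (auto simp: Units_def ring_mat_def)
  have "transpose_mat H = transpose_mat H * (?G * H)" using H by simp
  also have "\<dots> = transpose_mat (transpose_mat ?G * H) * H"
    using H(1) B by (simp add: assoc_mult_mat_dim transpose_mult_dim)
  also have "transpose_mat ?G = ?G" using B by (simp add: transpose_mult_dim)
  finally have "transpose_mat H = H" unfolding H(3) using H(1) by simp
  with H that show ?thesis by blast
qed

lemma is_MP_inverse_unique:
  fixes A X Y :: "real mat"
  assumes X: "is_MP_inverse A X" and Y: "is_MP_inverse A Y"
  shows "X = Y"
proof -
  obtain n m where A: "A \<in> carrier_mat n m" by blast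
  have Xc: "X \<in> carrier_mat m n" and Yc: "Y \<in> carrier_mat m n"
    using X Y A unfolding is_MP_inverse_def by auto
  note d = carrier_matD[OF A] carrier_matD[OF Xc] carrier_matD[OF Yc]
  note x = X[unfolded is_MP_inverse_def] and y = Y[unfolded is_MP_inverse_def]
  have "X = X * (A * X)" using x d by (simp add: assoc_mult_mat_dim)
  also have "\<dots> = X * (transpose_mat X * transpose_mat A)" using x d by (metis transpose_mult_dim)
  also have "transpose_mat A = transpose_mat (A * Y * A)" using y by simp
  also have "\<dots> = transpose_mat A * (transpose_mat Y * transpose_mat A)"
    using d by (simp add: transpose_mult_dim assoc_mult_mat_dim)
  also have "X * (transpose_mat X * (transpose_mat A * (transpose_mat Y * transpose_mat A)))
     = X * (transpose_mat (A * X) * transpose_mat (A * Y))"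
    using d by (simp add: transpose_mult_dim assoc_mult_mat_dim)
  also have "\<dots> = X * (A * (X * (A * Y)))" using x y d by (simp add: assoc_mult_mat_dim)
  also have "\<dots> = (X * (A * X)) * (A * Y)" using d by (simp add: assoc_mult_mat_dim)
  also have "\<dots> = X * A * Y" using x d by (simp add: assoc_mult_mat_dim)
  finally have XAY: "X = X * A * Y" .
  have "Y = (Y * A) * Y" using y d by (simp add: assoc_mult_mat_dim)
  also have "\<dots> = transpose_mat A * transpose_mat Y * Y" using y d by (metis transpose_mult_dim)
  also have "transpose_mat A = transpose_mat (A * X * A)" using x by simp
  also have "\<dots> * transpose_mat Y * Y = transpose_mat (X * A) * transpose_mat (Y * A) * Y"
    using d by (simp add: transpose_mult_dim assoc_mult_mat_dim)
  also have "\<dots> = X * A * Y" using x y d by (simp add: assoc_mult_mat_dim)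
  finally show ?thesis using XAY by simp
qed

lemma MP_inverse_exists_of_full_rank_factorization:
  fixes B C E :: "real mat"
  assumes B: "B \<in> carrier_mat n l" and C: "C \<in> carrier_mat l m" and E: "E \<in> carrier_mat m l"
    and ker_B: "mat_kernel B = {0\<^sub>v l}" and CE: "C * E = 1\<^sub>m l"
  shows "\<exists>X. is_MP_inverse (B * C) X"
proof -
  have Ct: "transpose_mat C \<in> carrier_mat m l" using C by simp
  have "v = 0\<^sub>v l" if v: "v \<in> carrier_vec l" "transpose_mat C *\<^sub>v v = 0\<^sub>v m" for v
  proof -
    have "v = transpose_mat (C * E) *\<^sub>v v" using CE v by simp
    also have "\<dots> = transpose_mat E *\<^sub>v (transpose_mat C *\<^sub>v v)"
      using C E v by (simp add: transpose_mult_dim assoc_mult_mat_vec_dim)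
    finally show ?thesis using v(2) E by simp
  qed
  then have ker_Ct: "mat_kernel (transpose_mat C) = {0\<^sub>v l}"
    unfolding mat_kernel[OF Ct] using C by auto
  obtain H
    where H: "H \<in> carrier_mat l l" "H * (transpose_mat B * B) = 1\<^sub>m l" "transpose_mat H = H"
    using gram_mat_symmetric_inverse[OF B ker_B] by metis
  obtain K
    where K: "K \<in> carrier_mat l l" "C * transpose_mat C * K = 1\<^sub>m l" "transpose_mat K = K"
    using gram_mat_symmetric_inverse[OF Ct ker_Ct] by (metis transpose_transpose)
  note dims = carrier_matD[OF B] carrier_matD[OF C] carrier_matD[OF H(1)] carrier_matD[OF K(1)]
  have H_cancel: "H * (transpose_mat B * (B * Z)) = Z" if "dim_row Z = l" for Z
    using H(1,2) dims that by (simp flip: assoc_mult_mat_dim)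
  have K_cancel: "C * (transpose_mat C * (K * Z)) = Z" if "dim_row Z = l" for Z
    using K(1,2) dims that by (simp flip: assoc_mult_mat_dim)
  define X where "X = transpose_mat C * K * H * transpose_mat B"
  have BC_X: "B * C * X = B * (H * transpose_mat B)"
    unfolding X_def using dims by (simp add: assoc_mult_mat_dim K_cancel)
  have X_BC: "X * (B * C) = transpose_mat C * (K * C)"
    unfolding X_def using dims by (simp add: assoc_mult_mat_dim H_cancel)
  have "is_MP_inverse (B * C) X"
    unfolding is_MP_inverse_def
  proof (intro conjI)
    show "X \<in> carrier_mat (dim_col (B * C)) (dim_row (B * C))"
      unfolding X_def using dims by auto
    show "B * C * X * (B * C) = B * C"
      unfolding BC_X using dims by (simp add: assoc_mult_mat_dim H_cancel)
    show "X * (B * C) * X = X"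
      unfolding X_BC X_def using dims by (simp add: assoc_mult_mat_dim H_cancel K_cancel)
    show "transpose_mat (B * C * X) = B * C * X"
      unfolding BC_X using dims by (simp add: transpose_mult_dim H(3) assoc_mult_mat_dim)
    show "transpose_mat (X * (B * C)) = X * (B * C)"
      unfolding X_BC using dims by (simp add: transpose_mult_dim K(3) assoc_mult_mat_dim)
  qed
  then show ?thesis by blast
qed

definition col_comb :: "'a :: semiring_0 mat \<Rightarrow> nat list \<Rightarrow> (nat \<Rightarrow> 'a) \<Rightarrow> nat \<Rightarrow> 'a" where
  "col_comb A js x i = (\<Sum>q<length js. A $$ (i, js ! q) * x q)"

definition independent_cols :: "'a :: semiring_0 mat \<Rightarrow> nat list \<Rightarrow> bool" where
  "independent_cols A js \<longleftrightarrow>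
     (\<forall>x. (\<forall>i<dim_row A. col_comb A js x i = 0) \<longrightarrow> (\<forall>q<length js. x q = 0))"

definition in_col_span :: "'a :: semiring_0 mat \<Rightarrow> nat list \<Rightarrow> nat \<Rightarrow> bool" where
  "in_col_span A js j \<longleftrightarrow> (\<exists>y. \<forall>i<dim_row A. A $$ (i, j) = col_comb A js y i)"

lemma col_comb_snoc:
  "col_comb A (js @ [k]) x i = col_comb A js x i + A $$ (i, k) * x (length js)"
  by (simp add: col_comb_def nth_append)

lemma in_col_span_snoc:
  assumes "in_col_span A js j"
  shows "in_col_span A (js @ [k]) j"
proof -
  from assms obtain y where y: "\<forall>i<dim_row A. A $$ (i, j) = col_comb A js y i"
    unfolding in_col_span_def by blast
  have "col_comb A js (y(length js := 0)) i = col_comb A js y i" for i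
    unfolding col_comb_def by (rule sum.cong) auto
  then show ?thesis
    unfolding in_col_span_def using y
    by (intro exI[of _ "y(length js := 0)"]) (simp add: col_comb_snoc)
qed

lemma in_col_span_snoc_self:
  fixes A :: "'a :: semiring_1 mat"
  shows "in_col_span A (js @ [k]) k"
proof -
  have "col_comb A js (\<lambda>q. if q = length js then 1 else 0) i = 0" for i
    unfolding col_comb_def by (rule sum.neutral) auto
  then show ?thesis
    unfolding in_col_span_def
    by (intro exI[of _ "\<lambda>q. if q = length js then 1 else 0"]) (simp add: col_comb_snoc)
qed

lemma independent_cols_snoc:
  fixes A :: "'a :: field mat"
  assumes indep: "independent_cols A js" and new: "\<not> in_col_span A js k"
  shows "independent_cols A (js @ [k])"
  unfolding independent_cols_def
proof (rule allI, rule impI)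
  fix x assume x: "\<forall>i<dim_row A. col_comb A (js @ [k]) x i = 0"
  let ?l = "length js"
  have x_last: "x ?l = 0"
  proof (rule ccontr)
    assume ne: "x ?l \<noteq> 0"
    have "A $$ (i, k) = col_comb A js (\<lambda>q. - x q / x ?l) i" if "i < dim_row A" for i
    proof -
      have "col_comb A js (\<lambda>q. - x q / x ?l) i = - col_comb A js x i / x ?l"
        unfolding col_comb_def by (simp add: sum_divide_distrib sum_negf)
      also have "col_comb A js x i = - A $$ (i, k) * x ?l"
        using x that by (simp add: col_comb_snoc eq_neg_iff_add_eq_0)
      finally show ?thesis using ne by simp
    qed
    with new show False unfolding in_col_span_def by blast
  qed
  then have "\<forall>i<dim_row A. col_comb A js x i = 0" using x by (simp add: col_comb_snoc)
  with indep have "\<forall>q<?l. x q = 0" unfolding independent_cols_def by blast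
  with x_last show "\<forall>q<length (js @ [k]). x q = 0" by (auto simp: less_Suc_eq)
qed

lemma exists_independent_spanning_cols:
  fixes A :: "'a :: field mat"
  shows "\<exists>js. set js \<subseteq> {..<k} \<and> independent_cols A js \<and> (\<forall>j<k. in_col_span A js j)"
proof (induction k)
  case 0
  have "independent_cols A []" unfolding independent_cols_def by simp
  then show ?case by auto
next
  case (Suc k)
  then obtain js where js: "set js \<subseteq> {..<k}" "independent_cols A js" "\<forall>j<k. in_col_span A js j"
    by blast
  show ?case
  proof (cases "in_col_span A js k")
    case True
    with js show ?thesis by (intro exI[of _ js]) (auto simp: less_Suc_eq)
  next
    case False
    with js show ?thesis
      by (intro exI[of _ "js @ [k]"])
        (auto simp: less_Suc_eq independent_cols_snoc in_col_span_snoc in_col_span_snoc_self)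
  qed
qed

lemma mat_kernel_of_independent_cols:
  assumes indep: "independent_cols A js"
  shows "mat_kernel (mat (dim_row A) (length js) (\<lambda>(i, q). A $$ (i, js ! q))) = {0\<^sub>v (length js)}"
    (is "mat_kernel ?B = _")
proof -
  have B: "?B \<in> carrier_mat (dim_row A) (length js)" by simp
  have "v = 0\<^sub>v (length js)"
    if v: "v \<in> carrier_vec (length js)" "?B *\<^sub>v v = 0\<^sub>v (dim_row A)" for v
  proof -
    have "col_comb A js (\<lambda>q. v $ q) i = 0" if "i < dim_row A" for i
      using v(1) that arg_cong[OF v(2), of "\<lambda>w. w $ i"]
      unfolding col_comb_def by (simp add: scalar_prod_def atLeast0LessThan)
    with indep have "\<forall>q<length js. v $ q = 0" unfolding independent_cols_def by blast
    with v(1) show ?thesis by (intro eq_vecI) auto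
  qed
  then show ?thesis unfolding mat_kernel[OF B] by auto
qed

lemma mult_left_cancel_of_mat_kernel:
  fixes B :: "'a :: comm_ring_1 mat"
  assumes B: "B \<in> carrier_mat n l" and ker: "mat_kernel B = {0\<^sub>v l}"
    and Z: "Z \<in> carrier_mat l k" and W: "W \<in> carrier_mat l k" and eq: "B * Z = B * W"
  shows "Z = W"
proof (rule mat_col_eqI)
  fix j assume "j < dim_col W"
  then have j: "j < k" using W by simp
  have "B *\<^sub>v (col Z j - col W j) = B *\<^sub>v col Z j - B *\<^sub>v col W j"
    by (rule mult_minus_distrib_mat_vec[OF B]) (use Z W in auto)
  also have "B *\<^sub>v col Z j = B *\<^sub>v col W j"
    by (metis col_mult2[OF B Z j] col_mult2[OF B W j] eq)
  also have "B *\<^sub>v col W j - B *\<^sub>v col W j = 0\<^sub>v n"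
    using B W by (intro minus_cancel_vec) auto
  finally have "col Z j - col W j \<in> mat_kernel B"
    using Z W j by (intro mat_kernelI[OF B]) auto
  then have diff: "col Z j - col W j = 0\<^sub>v l" using ker by simp
  show "col Z j = col W j"
  proof (rule eq_vecI)
    fix i assume "i < dim_vec (col W j)"
    then have "i < l" using W by simp
    then show "col Z j $ i = col W j $ i"
      using arg_cong[OF diff, of "\<lambda>v. v $ i"] Z W by simp
  qed (use Z W in simp)
qed (use Z W in simp_all)

lemma full_rank_factorization_exists:
  fixes A :: "'a :: field mat"
  obtains l B C E where "B \<in> carrier_mat (dim_row A) l" "C \<in> carrier_mat l (dim_col A)"
    "E \<in> carrier_mat (dim_col A) l" "mat_kernel B = {0\<^sub>v l}" "C * E = 1\<^sub>m l" "A = B * C"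
proof -
  define n m where "n = dim_row A" and "m = dim_col A"
  obtain js where js: "set js \<subseteq> {..<m}" "independent_cols A js" "\<forall>j<m. in_col_span A js j"
    using exists_independent_spanning_cols by blast
  define l where "l = length js"
  from js(3) obtain y where y: "\<forall>j<m. \<forall>i<n. A $$ (i, j) = col_comb A js (y j) i"
    unfolding in_col_span_def n_def by metis
  define B where "B = mat n l (\<lambda>(i, q). A $$ (i, js ! q))"
  define C where "C = mat l m (\<lambda>(q, j). y j q)"
  define E where "E = mat m l (\<lambda>(j, q). if j = js ! q then 1 else 0 :: 'a)"
  have B: "B \<in> carrier_mat n l" and C: "C \<in> carrier_mat l m" and E: "E \<in> carrier_mat m l"
    unfolding B_def C_def E_def by auto
  have BC: "A = B * C"
  proof (rule eq_matI)
    fix i j assume "i < dim_row (B * C)" "j < dim_col (B * C)"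
    then have ij: "i < n" "j < m" using B C by auto
    then show "A $$ (i, j) = (B * C) $$ (i, j)"
      using y unfolding B_def C_def col_comb_def l_def
      by (simp add: scalar_prod_def atLeast0LessThan)
  qed (use B C in \<open>auto simp: n_def m_def\<close>)
  have AE: "A * E = B"
  proof (rule eq_matI)
    fix i q assume "i < dim_row B" "q < dim_col B"
    then have iq: "i < n" "q < l" using B by auto
    then have "js ! q < m" using js(1) nth_mem unfolding l_def by blast
    have "(A * E) $$ (i, q) = (\<Sum>p\<in>{0..<m}. A $$ (i, p) * (if p = js ! q then 1 else 0))"
      using iq unfolding E_def by (simp add: scalar_prod_def n_def m_def)
    also have "\<dots> = A $$ (i, js ! q)"
      using \<open>js ! q < m\<close> by (simp add: if_distrib cong: if_cong)
    finally show "(A * E) $$ (i, q) = B $$ (i, q)" using iq unfolding B_def by simp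
  qed (use B E in \<open>auto simp: n_def\<close>)
  have ker: "mat_kernel B = {0\<^sub>v l}"
    using mat_kernel_of_independent_cols[OF js(2)] unfolding B_def n_def l_def .
  have "B * (C * E) = A * E" unfolding BC using B C E by simp
  also have "\<dots> = B * 1\<^sub>m l" using AE B by simp
  finally have "B * (C * E) = B * 1\<^sub>m l" .
  then have CE: "C * E = 1\<^sub>m l"
    by (rule mult_left_cancel_of_mat_kernel[OF B ker mult_carrier_mat[OF C E] one_carrier_mat])
  from B C E ker CE BC show ?thesis unfolding n_def m_def by (rule that)
qed

lemma MP_inverse_exists: "\<exists>X. is_MP_inverse A X"
proof -
  obtain l B C E where "B \<in> carrier_mat (dim_row A) l" "C \<in> carrier_mat l (dim_col A)"
    "E \<in> carrier_mat (dim_col A) l" "mat_kernel B = {0\<^sub>v l}" "C * E = 1\<^sub>m l" "A = B * C"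
    by (rule full_rank_factorization_exists)
  then show ?thesis using MP_inverse_exists_of_full_rank_factorization by blast
qed

lemma is_MP_inverse_MP_inverse: "is_MP_inverse A (MP_inverse A)"
  unfolding MP_inverse_def using MP_inverse_exists is_MP_inverse_unique by (metis theI)

lemma MP_inverse_carrier_mat: "MP_inverse A \<in> carrier_mat (dim_col A) (dim_row A)"
  using is_MP_inverse_MP_inverse[of A] unfolding is_MP_inverse_def by simp

lemma MP_inverse_mult_vec_eq_0:
  fixes A :: "real mat"
  assumes v: "v \<in> carrier_vec (dim_row A)" and Av: "transpose_mat A *\<^sub>v v = 0\<^sub>v (dim_col A)"
  shows "MP_inverse A *\<^sub>v v = 0\<^sub>v (dim_col A)"
proof -
  let ?X = "MP_inverse A"
  have X: "?X \<in> carrier_mat (dim_col A) (dim_row A)" "?X * A * ?X = ?X"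
    "transpose_mat (A * ?X) = A * ?X"
    using is_MP_inverse_MP_inverse[of A] unfolding is_MP_inverse_def by auto
  have "?X = ?X * transpose_mat (A * ?X)" using X by (simp add: assoc_mult_mat_dim)
  also have "\<dots> = ?X * transpose_mat ?X * transpose_mat A"
    using X by (simp add: transpose_mult_dim assoc_mult_mat_dim)
  finally have "?X *\<^sub>v v = (?X * transpose_mat ?X * transpose_mat A) *\<^sub>v v"
    by (rule arg_cong)
  also have "\<dots> = (?X * transpose_mat ?X) *\<^sub>v (transpose_mat A *\<^sub>v v)"
    using X v by (simp add: assoc_mult_mat_vec_dim)
  finally show ?thesis using Av X by simp
qed

definition outer_mat :: "nat \<Rightarrow> (nat \<Rightarrow> 'a :: times) \<Rightarrow> 'a mat" where
  "outer_mat n s = mat n n (\<lambda>(i, j). s i * s j)"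

lemma mult_outer_mat_eq_0:
  fixes X :: "'a :: comm_semiring_0 mat"
  assumes X: "X \<in> carrier_mat m n" and Xs: "X *\<^sub>v vec n s = 0\<^sub>v m"
  shows "X * outer_mat n s = 0\<^sub>m m n"
proof (rule eq_matI)
  fix e j assume "e < dim_row (0\<^sub>m m n :: 'a mat)" "j < dim_col (0\<^sub>m m n :: 'a mat)"
  then have ej: "e < m" "j < n" by auto
  have "(X * outer_mat n s) $$ (e, j) = (\<Sum>k<n. X $$ (e, k) * s k) * s j"
    using X ej unfolding outer_mat_def
    by (simp add: scalar_prod_def sum_distrib_right atLeast0LessThan mult.assoc)
  also have "(\<Sum>k<n. X $$ (e, k) * s k) = (X *\<^sub>v vec n s) $ e"
    using X ej by (simp add: scalar_prod_def atLeast0LessThan)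
  finally show "(X * outer_mat n s) $$ (e, j) = 0\<^sub>m m n $$ (e, j)"
    using Xs ej by simp
qed (use X in \<open>auto simp: outer_mat_def\<close>)

lemma outer_mat_square:
  fixes s :: "nat \<Rightarrow> 'a :: comm_semiring_1"
  shows "outer_mat n s * outer_mat n s = (\<Sum>k<n. s k * s k) \<cdot>\<^sub>m outer_mat n s"
proof (rule eq_matI)
  fix i j assume "i < dim_row ((\<Sum>k<n. s k * s k) \<cdot>\<^sub>m outer_mat n s)"
    "j < dim_col ((\<Sum>k<n. s k * s k) \<cdot>\<^sub>m outer_mat n s)"
  then have ij: "i < n" "j < n" by (auto simp: outer_mat_def)
  then have "(outer_mat n s * outer_mat n s) $$ (i, j) = (\<Sum>k<n. (s i * s k) * (s k * s j))"
    unfolding outer_mat_def by (simp add: scalar_prod_def atLeast0LessThan)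
  also have "\<dots> = (\<Sum>k<n. s k * s k) * (s i * s j)"
    unfolding sum_distrib_right by (simp add: ac_simps)
  finally show "(outer_mat n s * outer_mat n s) $$ (i, j)
    = ((\<Sum>k<n. s k * s k) \<cdot>\<^sub>m outer_mat n s) $$ (i, j)"
    using ij unfolding outer_mat_def by simp
qed (auto simp: outer_mat_def)

definition colour_sign :: "(nat \<Rightarrow> bool) \<Rightarrow> nat \<Rightarrow> real" where
  "colour_sign c u = (if c u then 1 else -1)"

lemma colour_sign_square [simp]: "colour_sign c u * colour_sign c u = 1"
  by (simp add: colour_sign_def)

lemma walk_len_sign:
  assumes proper: "\<forall>u v. adj es u v \<longrightarrow> c u \<noteq> c v" and walk: "walk_len es u v k"
  shows "(-1 :: real) ^ k = colour_sign c u * colour_sign c v"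
proof -
  from walk obtain xs where xs: "length xs = Suc k" "hd xs = u" "last xs = v"
    "\<forall>i<k. adj es (xs ! i) (xs ! Suc i)" unfolding walk_len_def by blast
  have prefix: "(-1 :: real) ^ l = colour_sign c (xs ! 0) * colour_sign c (xs ! l)"
    if "l \<le> k" for l
    using that
  proof (induction l)
    case 0
    then show ?case by simp
  next
    case (Suc l)
    then have "c (xs ! l) \<noteq> c (xs ! Suc l)" using xs(4) proper by simp
    then have "colour_sign c (xs ! Suc l) = - colour_sign c (xs ! l)"
      unfolding colour_sign_def by auto
    with Suc show ?case by simp
  qed
  have "xs \<noteq> []" using xs(1) by auto
  then have "xs ! 0 = u" "xs ! k = v" using xs by (auto simp: hd_conv_nth last_conv_nth)
  with prefix[of k] show ?thesis by simp
qed

lemma sign_dist_mat_eq_outer_mat: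
  assumes conn: "connected_graph n es" and proper: "\<forall>u v. adj es u v \<longrightarrow> c u \<noteq> c v"
  shows "sign_dist_mat n es = outer_mat n (colour_sign c)"
proof (rule eq_matI)
  fix i j assume "i < dim_row (outer_mat n (colour_sign c))" "j < dim_col (outer_mat n (colour_sign c))"
  then have ij: "i < n" "j < n" by (auto simp: outer_mat_def)
  with conn obtain k where "walk_len es i j k" unfolding connected_graph_def by blast
  then have "walk_len es i j (gdist es i j)" unfolding gdist_def by (rule LeastI)
  with ij show "sign_dist_mat n es $$ (i, j) = outer_mat n (colour_sign c) $$ (i, j)"
    unfolding sign_dist_mat_def outer_mat_def by (simp add: walk_len_sign[OF proper])
qed (auto simp: sign_dist_mat_def outer_mat_def)

lemma transpose_incidence_mat_mult_colour_signs:
  assumes simple: "simple_graph n es" and proper: "\<forall>u v. adj es u v \<longrightarrow> c u \<noteq> c v"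
  shows "transpose_mat (incidence_mat n es) *\<^sub>v vec n (colour_sign c) = 0\<^sub>v (length es)"
proof (rule eq_vecI)
  fix e assume "e < dim_vec (0\<^sub>v (length es) :: real vec)"
  then have e: "es ! e \<in> set es" "e < length es" by auto
  then obtain a b where ab: "a < n" "b < n" "a \<noteq> b" "es ! e = {a, b}"
    using simple unfolding simple_graph_def by blast
  have "c a \<noteq> c b" using proper e(1) ab(4) unfolding adj_def by metis
  have "(transpose_mat (incidence_mat n es) *\<^sub>v vec n (colour_sign c)) $ e
      = (\<Sum>i<n. if i \<in> {a, b} then colour_sign c i else 0)"
    using e ab(4) unfolding incidence_mat_def
    by (auto simp: scalar_prod_def atLeast0LessThan intro!: sum.cong)
  also have "\<dots> = sum (colour_sign c) {i \<in> {..<n}. i \<in> {a, b}}"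
    by (rule sum.inter_filter[symmetric]) simp
  also have "{i \<in> {..<n}. i \<in> {a, b}} = {a, b}" using ab by auto
  also have "sum (colour_sign c) {a, b} = 0"
    using ab(3) \<open>c a \<noteq> c b\<close> by (auto simp: colour_sign_def)
  finally show "(transpose_mat (incidence_mat n es) *\<^sub>v vec n (colour_sign c)) $ e
      = 0\<^sub>v (length es) $ e"
    using e by simp
qed (simp add: incidence_mat_def)

theorem mainTheorem8:
  fixes n :: nat and es :: "nat set list"
  assumes "simple_graph n es" and "connected_graph n es" and "bipartite_graph es"
  shows "MP_inverse (incidence_mat n es) * sign_dist_mat n es = 0\<^sub>m (length es) n
     \<and> sign_dist_mat n es * sign_dist_mat n es = of_nat n \<cdot>\<^sub>m sign_dist_mat n es"
proof
  from assms(3) obtain c :: "nat \<Rightarrow> bool" where proper: "\<forall>u v. adj es u v \<longrightarrow> c u \<noteq> c v"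
    unfolding bipartite_graph_def by blast
  let ?M = "incidence_mat n es" and ?s = "colour_sign c"
  have J: "sign_dist_mat n es = outer_mat n ?s"
    by (rule sign_dist_mat_eq_outer_mat[OF assms(2) proper])
  have M: "?M \<in> carrier_mat n (length es)" unfolding incidence_mat_def by simp
  have "MP_inverse ?M *\<^sub>v vec n ?s = 0\<^sub>v (length es)"
    using MP_inverse_mult_vec_eq_0[of "vec n ?s" ?M]
      transpose_incidence_mat_mult_colour_signs[OF assms(1) proper] M by simp
  with MP_inverse_carrier_mat[of ?M] M
  show "MP_inverse ?M * sign_dist_mat n es = 0\<^sub>m (length es) n"
    unfolding J by (simp add: mult_outer_mat_eq_0)
  have "(\<Sum>k<n. ?s k * ?s k) = of_nat n" by simp
  then show "sign_dist_mat n es * sign_dist_mat n es = of_nat n \<cdot>\<^sub>m sign_dist_mat n es"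
    unfolding J outer_mat_square by simp
qed

end
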